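(* If an $r$-graph $H$ is $2$-locally large, then $H$ has at least three edges.
   Context: An $r$-graph is an $r$-uniform hypergraph. Let $H$ be an $r$-graph on $m$ vertices and $\sigma:V(H)\to[m]$ a bijection. For $x\in V(H)$ and $1\le i\le r$, $T_x^i$ is the set of edges $e\ni x$ such that $\sigma(x)$ is the $i$-th smallest of the values $\sigma(v)$, $v\in e$. For $r+1\le i\le 2r+1$, $T_x^i$ is the set of edges $e\not\ni x$ such that $\sigma(x)$ is the $(i-r)$-th smallest among the values $\sigma(v)$, $v\in e\cup\{x\}$. $H$ is $2$-locally large if there exists a bijection $\sigma:V(H)\to[m]$ such that for every vertex $x\in V(H)$ some $T_x^i$, $i\in[2r+1]$, contains at least two edges. *)

theory Defs
  imports Main
begin

definition r_graph :: "nat \<Rightarrow> 'a set \<Rightarrow> 'a set set \<Rightarrow> bool" where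
  "r_graph r V E \<longleftrightarrow> finite V \<and> (\<forall>e\<in>E. e \<subseteq> V \<and> card e = r)"

text \<open>The i-th smallest element (1-based) of a finite set of naturals.\<close>
definition ith_smallest :: "nat \<Rightarrow> nat set \<Rightarrow> nat" where
  "ith_smallest i S = sorted_list_of_set S ! (i - 1)"

definition T_set :: "nat \<Rightarrow> 'a set set \<Rightarrow> ('a \<Rightarrow> nat) \<Rightarrow> 'a \<Rightarrow> nat \<Rightarrow> 'a set set" where
  "T_set r E \<sigma> x i =
     (if 1 \<le> i \<and> i \<le> r then
        {e \<in> E. x \<in> e \<and> \<sigma> x = ith_smallest i (\<sigma> ` e)}
      else if r + 1 \<le> i \<and> i \<le> 2 * r + 1 then
        {e \<in> E. x \<notin> e \<and> \<sigma> x = ith_smallest (i - r) (\<sigma> ` (e \<union> {x}))}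
      else {})"

definition two_locally_large :: "nat \<Rightarrow> 'a set \<Rightarrow> 'a set set \<Rightarrow> bool" where
  "two_locally_large r V E \<longleftrightarrow>
     (\<exists>\<sigma>. bij_betw \<sigma> V {1..card V} \<and>
        (\<forall>x\<in>V. \<exists>i\<in>{1..2 * r + 1}. 2 \<le> card (T_set r E \<sigma> x i)))"

end

theory Submission
  imports Defs
begin

text \<open>Some vertex must have two edges in one of its sets \<open>T_x^i\<close>, so there are at least two
edges. If there were exactly two, \<open>e\<^sub>1\<close> and \<open>e\<^sub>2\<close>, then, having the same size, they differ in a
vertex \<open>y \<in> e\<^sub>1 - e\<^sub>2\<close>. A set \<open>T_y^i\<close> with two edges would contain both, but all edges of
\<open>T_y^i\<close> contain \<open>y\<close> (if \<open>i \<le> r\<close>) or all avoid it (if \<open>i > r\<close>). The argument works for any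
labelling \<open>\<sigma>\<close>.\<close>

lemma T_set_subset: "T_set r E \<sigma> x i \<subseteq> E"
  unfolding T_set_def by auto

lemma T_set_same_incidence:
  assumes "e\<^sub>1 \<in> T_set r E \<sigma> x i" and "e\<^sub>2 \<in> T_set r E \<sigma> x i"
  shows "x \<in> e\<^sub>1 \<longleftrightarrow> x \<in> e\<^sub>2"
  using assms unfolding T_set_def by (auto split: if_splits)

lemma r_graph_finite_edges:
  assumes "r_graph r V E"
  shows "finite E"
proof -
  have "E \<subseteq> Pow V" and "finite V"
    using assms unfolding r_graph_def by auto
  then show ?thesis
    by (simp add: finite_subset)
qed

lemma r_graph_edges_not_nested:
  assumes "r_graph r V E" and "e\<^sub>1 \<in> E" and "e\<^sub>2 \<in> E" and "e\<^sub>1 \<noteq> e\<^sub>2"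
  shows "\<not> e\<^sub>1 \<subseteq> e\<^sub>2"
proof
  assume "e\<^sub>1 \<subseteq> e\<^sub>2"
  moreover have "card e\<^sub>1 = card e\<^sub>2" and "finite e\<^sub>2"
    using assms(1-3) unfolding r_graph_def by (auto intro: finite_subset)
  ultimately show False
    using assms(4) card_subset_eq by metis
qed

lemma r_graph_two_edges_small_T_sets:
  assumes "r_graph r V E" and "card E = 2"
  obtains y where "y \<in> V" and "\<And>\<sigma> i. card (T_set r E \<sigma> y i) \<le> 1"
proof -
  obtain e\<^sub>1 e\<^sub>2 where E: "E = {e\<^sub>1, e\<^sub>2}" and "e\<^sub>1 \<noteq> e\<^sub>2"
    using assms(2) by (auto simp: card_2_iff)
  then obtain y where y: "y \<in> e\<^sub>1" "y \<notin> e\<^sub>2"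
    using r_graph_edges_not_nested[OF assms(1)] by blast
  have finite_E: "finite E"
    using r_graph_finite_edges[OF assms(1)] .
  have "y \<in> V"
    using assms(1) E y unfolding r_graph_def by auto
  moreover have "card (T_set r E \<sigma> y i) \<le> 1" for \<sigma> i
  proof (rule ccontr)
    assume "\<not> card (T_set r E \<sigma> y i) \<le> 1"
    then have "card E \<le> card (T_set r E \<sigma> y i)"
      using assms(2) by linarith
    then have "T_set r E \<sigma> y i = E"
      by (rule card_seteq[OF finite_E T_set_subset])
    then show False
      using T_set_same_incidence[of e\<^sub>1 r E \<sigma> y i e\<^sub>2] E y by auto
  qed
  ultimately show thesis
    using that by blast
qed

theorem proposition1:
  fixes r :: nat and V :: "'a set" and E :: "'a set set"
  assumes "r_graph r V E"
    and "V \<noteq> {}"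
    and "two_locally_large r V E"
  shows "card E \<ge> 3"
proof -
  obtain \<sigma> where large: "\<forall>x\<in>V. \<exists>i\<in>{1..2 * r + 1}. 2 \<le> card (T_set r E \<sigma> x i)"
    using assms(3) unfolding two_locally_large_def by blast
  have "card E \<ge> 2"
  proof -
    obtain x where "x \<in> V"
      using assms(2) by blast
    then obtain i where "2 \<le> card (T_set r E \<sigma> x i)"
      using large by blast
    then show ?thesis
      using card_mono[OF r_graph_finite_edges[OF assms(1)] T_set_subset[of r E \<sigma> x i]]
      by linarith
  qed
  moreover have "card E \<noteq> 2"
  proof
    assume "card E = 2"
    then obtain y where "y \<in> V" and small: "\<And>\<sigma> i. card (T_set r E \<sigma> y i) \<le> 1"
      using r_graph_two_edges_small_T_sets[OF assms(1)] by blast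
    then obtain i where "2 \<le> card (T_set r E \<sigma> y i)"
      using large by blast
    with small[of \<sigma> i] show False
      by linarith
  qed
  ultimately show ?thesis
    by linarith
qed

end
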